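(* In the setting described in the context, let $\phi$ be an automorphism of the graph $\bar\Gamma$, let $\tau'=\phi(\tau)$ with root $r'=\phi(r)$, and let $wt'$ be the re-gauged weight function. Then: (1) There is at most one $*$-automorphism $\psi$ of $\mathscr A$ satisfying $\psi(wt(f))=wt'(\phi(f))$ for every oriented edge $f$; it is determined by the requirement $\psi(wt(f))=wt'(\phi(f))$ for the oriented edges $f$ not in $\tau$. (2) The elements $wt'(\phi(f))$, $f$ ranging over the oriented edges of $\bar\Gamma$, generate $\mathscr A$ as a $C^*$-algebra (so whether such a $\psi$ defines an automorphism only needs to be checked on the generators $wt(f)$). (3) $\psi$ is induced by a base change of $\pi_1(\bar\Gamma,r)$: there is a group automorphism $\beta$ of $\pi_1(\bar\Gamma,r)$ with $\beta([l^\tau(f)])=P([l^{\tau'}(\phi(f))])$ for every oriented edge $f$ not in $\tau$, and if $\psi$ as in (1) exists then $\psi(\rho(x))=\rho(\beta(x))$ for all $x\in\pi_1(\bar\Gamma,r)$.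
   Context: $\bar\Gamma$ is a finite connected graph (multiple edges and loops allowed); an oriented edge $f$ from $x$ to $y$ has reverse $\bar f$. An automorphism $\phi$ of $\bar\Gamma$ is a pair of bijections of the vertex set and of the edge set preserving incidence; it acts on oriented edges. $\tau$ is a spanning tree of $\bar\Gamma$ with root $r$. $\mathscr A$ is a unital $C^*$-algebra and $wt$ assigns to every oriented edge $f$ a unitary $wt(f)\in\mathscr A$ with $wt(\bar f)=wt(f)^*$, $wt(f)=1$ whenever the underlying edge lies in $\tau$, and such that $\mathscr A$ is generated as a $C^*$-algebra by all $wt(f)$. For a closed walk $\gamma$ at $r$ traversing $f_1,\dots,f_m$ in order put $\rho(\gamma)=wt(f_m)\cdots wt(f_1)$; this gives a group homomorphism $\rho:\pi_1(\bar\Gamma,r)\to U(\mathscr A)$. For a spanning tree $\sigma$ and vertices $x,y$ let $\sigma[x\to y]$ denote the unique non-backtracking path in $\sigma$ from $x$ to $y$. For an oriented edge $f$ from $x$ to $y$, $l^\tau(f)$ is the closed walk $\tau[r\to x]$, $f$, $\tau[y\to r]$ at $r$, and $l^{\tau'}(f)$ is the closed walk $\tau'[r'\to x]$, $f$, $\tau'[y\to r']$ at $r'$. $P:\pi_1(\bar\Gamma,r')\to\pi_1(\bar\Gamma,r)$ is the isomorphism $[\gamma]\mapsto[\tau[r\to r']\,\gamma\,\tau[r'\to r]]$. The re-gauged weight function for the pushed-forward spanning tree $\tau'$ is $wt'(f):=\rho(P([l^{\tau'}(f)]))$. *)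

theory Defs
  imports "HOL-Analysis.Analysis" "HOL-Algebra.Group"
begin

class cstar = real_normed_algebra_1 + banach +
  fixes cscale :: "complex \<Rightarrow> 'a \<Rightarrow> 'a"
    and cadj :: "'a \<Rightarrow> 'a"
  assumes cscale_of_real: "cscale (complex_of_real r) x = scaleR r x"
    and cscale_add_left: "cscale (a + b) x = cscale a x + cscale b x"
    and cscale_add_right: "cscale a (x + y) = cscale a x + cscale a y"
    and cscale_cscale: "cscale a (cscale b x) = cscale (a * b) x"
    and cscale_one: "cscale 1 x = x"
    and norm_cscale: "norm (cscale a x) = cmod a * norm x"
    and cscale_mult_left: "cscale a x * y = cscale a (x * y)"
    and cscale_mult_right: "x * cscale a y = cscale a (x * y)"
    and cadj_cadj: "cadj (cadj x) = x"
    and cadj_add: "cadj (x + y) = cadj x + cadj y"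
    and cadj_cscale: "cadj (cscale a x) = cscale (cnj a) (cadj x)"
    and cadj_mult: "cadj (x * y) = cadj y * cadj x"
    and cstar_identity: "norm (cadj x * x) = norm x ^ 2"

definition unitary :: "'a::cstar \<Rightarrow> bool" where
  "unitary u \<longleftrightarrow> cadj u * u = 1 \<and> u * cadj u = 1"

definition cstar_gen :: "'a::cstar set \<Rightarrow> 'a set" where
  "cstar_gen S = \<Inter>{B. S \<subseteq> B \<and> closed B \<and> 1 \<in> B
      \<and> (\<forall>x\<in>B. \<forall>y\<in>B. x + y \<in> B \<and> x * y \<in> B)
      \<and> (\<forall>c. \<forall>x\<in>B. cscale c x \<in> B) \<and> (\<forall>x\<in>B. cadj x \<in> B)}"

definition star_aut :: "('a::cstar \<Rightarrow> 'a) \<Rightarrow> bool" where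
  "star_aut \<psi> \<longleftrightarrow> bij \<psi> \<and> continuous_on UNIV \<psi>
     \<and> (\<forall>x y. \<psi> (x + y) = \<psi> x + \<psi> y)
     \<and> (\<forall>c x. \<psi> (cscale c x) = cscale c (\<psi> x))
     \<and> (\<forall>x y. \<psi> (x * y) = \<psi> x * \<psi> y)
     \<and> \<psi> 1 = 1
     \<and> (\<forall>x. \<psi> (cadj x) = cadj (\<psi> x))"

record ('v, 'o) graph =
  verts :: "'v set"
  oedges :: "'o set"
  rv :: "'o \<Rightarrow> 'o"
  org :: "'o \<Rightarrow> 'v"

definition tm :: "('v, 'o) graph \<Rightarrow> 'o \<Rightarrow> 'v" where
  "tm G f = org G (rv G f)"

fun walk :: "('v, 'o) graph \<Rightarrow> 'v \<Rightarrow> 'o list \<Rightarrow> 'v \<Rightarrow> bool" where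
  "walk G x [] y \<longleftrightarrow> x = y"
| "walk G x (f # ps) y \<longleftrightarrow> org G f = x \<and> walk G (tm G f) ps y"

definition reduced :: "('v, 'o) graph \<Rightarrow> 'o list \<Rightarrow> bool" where
  "reduced G ps \<longleftrightarrow> (\<forall>i. Suc i < length ps \<longrightarrow> ps ! Suc i \<noteq> rv G (ps ! i))"

definition finite_connected_graph :: "('v, 'o) graph \<Rightarrow> bool" where
  "finite_connected_graph G \<longleftrightarrow> finite (verts G) \<and> finite (oedges G) \<and> verts G \<noteq> {}
     \<and> (\<forall>f\<in>oedges G. rv G f \<in> oedges G \<and> rv G f \<noteq> f \<and> rv G (rv G f) = f
                       \<and> org G f \<in> verts G)
     \<and> (\<forall>x\<in>verts G. \<forall>y\<in>verts G. \<exists>ps. set ps \<subseteq> oedges G \<and> walk G x ps y)"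

definition spanning_tree :: "('v, 'o) graph \<Rightarrow> 'o set \<Rightarrow> bool" where
  "spanning_tree G T \<longleftrightarrow> T \<subseteq> oedges G \<and> (\<forall>f\<in>T. rv G f \<in> T)
     \<and> (\<forall>x\<in>verts G. \<forall>y\<in>verts G. \<exists>ps. set ps \<subseteq> T \<and> walk G x ps y)
     \<and> (\<forall>x ps. set ps \<subseteq> T \<and> walk G x ps x \<and> ps \<noteq> [] \<longrightarrow> \<not> reduced G ps)"

definition tpath :: "('v, 'o) graph \<Rightarrow> 'o set \<Rightarrow> 'v \<Rightarrow> 'v \<Rightarrow> 'o list" where
  "tpath G T x y = (THE ps. set ps \<subseteq> T \<and> walk G x ps y \<and> reduced G ps)"

definition lwalk :: "('v, 'o) graph \<Rightarrow> 'o set \<Rightarrow> 'v \<Rightarrow> 'o \<Rightarrow> 'o list" where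
  "lwalk G T r f = tpath G T r (org G f) @ [f] @ tpath G T (tm G f) r"

definition backtrack :: "('v, 'o) graph \<Rightarrow> ('o list \<times> 'o list) set" where
  "backtrack G = {(as @ [f, rv G f] @ bs, as @ bs) | as f bs. f \<in> oedges G}"

definition htp :: "('v, 'o) graph \<Rightarrow> ('o list \<times> 'o list) set" where
  "htp G = (backtrack G \<union> (backtrack G)\<inverse>)\<^sup>*"

definition hclass :: "('v, 'o) graph \<Rightarrow> 'o list \<Rightarrow> 'o list set" where
  "hclass G ps = htp G `` {ps}"

definition closed_walks :: "('v, 'o) graph \<Rightarrow> 'v \<Rightarrow> 'o list set" where
  "closed_walks G r = {ps. set ps \<subseteq> oedges G \<and> walk G r ps r}"

definition pi1 :: "('v, 'o) graph \<Rightarrow> 'v \<Rightarrow> 'o list set monoid" where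
  "pi1 G r = \<lparr> carrier = hclass G ` closed_walks G r,
               mult = (\<lambda>A B. htp G `` {a @ b | a b. a \<in> A \<and> b \<in> B}),
               one = hclass G [] \<rparr>"

definition basechange :: "('v, 'o) graph \<Rightarrow> 'o set \<Rightarrow> 'v \<Rightarrow> 'v \<Rightarrow> 'o list set \<Rightarrow> 'o list set" where
  "basechange G T r r' A = htp G `` {tpath G T r r' @ a @ tpath G T r' r | a. a \<in> A}"

definition rho_walk :: "('o \<Rightarrow> 'a::cstar) \<Rightarrow> 'o list \<Rightarrow> 'a" where
  "rho_walk wt ps = foldl (\<lambda>acc f. wt f * acc) 1 ps"

definition rho :: "('o \<Rightarrow> 'a::cstar) \<Rightarrow> 'o list set \<Rightarrow> 'a" where
  "rho wt A = rho_walk wt (SOME ps. ps \<in> A)"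

definition weight_function :: "('v, 'o) graph \<Rightarrow> 'o set \<Rightarrow> ('o \<Rightarrow> 'a::cstar) \<Rightarrow> bool" where
  "weight_function G T wt \<longleftrightarrow> (\<forall>f\<in>oedges G. unitary (wt f) \<and> wt (rv G f) = cadj (wt f))
     \<and> (\<forall>f\<in>T. wt f = 1) \<and> cstar_gen (wt ` oedges G) = UNIV"

definition regauge :: "('v, 'o) graph \<Rightarrow> 'o set \<Rightarrow> 'v \<Rightarrow> 'o set \<Rightarrow> 'v
    \<Rightarrow> ('o \<Rightarrow> 'a::cstar) \<Rightarrow> 'o \<Rightarrow> 'a" where
  "regauge G T r T' r' wt f = rho wt (basechange G T r r' (hclass G (lwalk G T' r' f)))"

definition graph_aut :: "('v, 'o) graph \<Rightarrow> ('v \<Rightarrow> 'v) \<Rightarrow> ('o \<Rightarrow> 'o) \<Rightarrow> bool" where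
  "graph_aut G \<phi>V \<phi>O \<longleftrightarrow> bij_betw \<phi>V (verts G) (verts G) \<and> bij_betw \<phi>O (oedges G) (oedges G)
     \<and> (\<forall>f\<in>oedges G. \<phi>O (rv G f) = rv G (\<phi>O f) \<and> org G (\<phi>O f) = \<phi>V (org G f))"

end

theory Submission
  imports Defs
begin

text \<open>Write g(x) for the wt-holonomy along the path of the new tree \<tau>' from r' to x.
  Unfolding l^{\<tau>'}(f) shows that the re-gauged weights are a gauge transform of the old ones,
  wt'(f) = g(y)\<inverse> wt(f) g(x) for f from x to y, so the wt'-holonomy of a walk is its
  wt-holonomy conjugated by g at its end points. Paths in \<tau> have trivial wt-holonomy, hence
  every g(y)\<inverse> g(x) lies in the C*-algebra generated by the wt'(\<phi> f), and so does every
  g(r)\<inverse> wt(f) g(r); conjugating back by the unitary g(r) gives (2). For (1), a *-automorphism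
  is determined by its values on generators, and wt'(\<phi> f) = 1 for tree edges f because
  l^{\<tau>'}(\<phi> f) is then a closed walk in \<tau>', hence null-homotopic. For (3), \<beta> is the map
  induced by \<phi> followed by the base change along \<tau>[r \<rightarrow> r']; since g(r') = 1 and
  holonomy is invariant under homotopy, \<psi> \<circ> \<rho> = \<rho> \<circ> \<beta>.\<close>

section \<open>Reduced walks and homotopy\<close>

lemma reduced_Nil [simp]: "reduced G []"
  and reduced_singleton [simp]: "reduced G [f]"
  by (simp_all add: reduced_def)

lemma reduced_Cons_Cons [simp]:
  "reduced G (f # g # ps) \<longleftrightarrow> g \<noteq> rv G f \<and> reduced G (g # ps)"
  unfolding reduced_def by (simp add: All_less_Suc2)

lemma reduced_Cons: "reduced G (f # p) \<longleftrightarrow> reduced G p \<and> (p \<noteq> [] \<longrightarrow> hd p \<noteq> rv G f)"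
  by (cases p) auto

lemma reduced_append:
  "reduced G (xs @ ys) \<longleftrightarrow> reduced G xs \<and> reduced G ys
     \<and> (xs \<noteq> [] \<longrightarrow> ys \<noteq> [] \<longrightarrow> hd ys \<noteq> rv G (last xs))"
proof (induction xs)
  case (Cons a xs)
  then show ?case by (cases xs) (auto simp: reduced_Cons)
qed simp

lemma not_reduced_backtrack:
  assumes "\<not> reduced G p"
  obtains as f bs where "p = as @ [f, rv G f] @ bs"
  using assms
proof (induction p arbitrary: thesis)
  case (Cons f p)
  show ?case
  proof (cases "reduced G p")
    case True
    with Cons.prems(2) obtain bs where "p = rv G f # bs" by (cases p) auto
    then show ?thesis using Cons.prems(1)[of "[]"] by simp
  next
    case False
    then obtain as g bs where "p = as @ [g, rv G g] @ bs" using Cons.IH by blast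
    then show ?thesis using Cons.prems(1)[of "f # as"] by simp
  qed
qed simp


lemma htp_refl [simp]: "(a, a) \<in> htp G"
  by (simp add: htp_def)

lemma htp_sym: "(a, b) \<in> htp G \<Longrightarrow> (b, a) \<in> htp G"
proof -
  have "sym (htp G)"
    unfolding htp_def by (rule sym_rtrancl) (simp add: sym_Un_converse)
  then show "(a, b) \<in> htp G \<Longrightarrow> (b, a) \<in> htp G" by (rule symD)
qed

lemma htp_trans: "(a, b) \<in> htp G \<Longrightarrow> (b, c) \<in> htp G \<Longrightarrow> (a, c) \<in> htp G"
  unfolding htp_def by (rule rtrancl_trans)

lemma htp_backtrack: "f \<in> oedges G \<Longrightarrow> (as @ [f, rv G f] @ bs, as @ bs) \<in> htp G"
  unfolding htp_def backtrack_def by blast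

lemma walk_append: "walk G x (p @ q) z \<longleftrightarrow> (\<exists>y. walk G x p y \<and> walk G y q z)"
  by (induction p arbitrary: x) auto

definition reverse_walk :: "('v, 'o) graph \<Rightarrow> 'o list \<Rightarrow> 'o list" where
  "reverse_walk G p = rev (map (rv G) p)"

lemma reverse_walk_Nil [simp]: "reverse_walk G [] = []"
  and reverse_walk_Cons [simp]: "reverse_walk G (f # p) = reverse_walk G p @ [rv G f]"
  and set_reverse_walk [simp]: "set (reverse_walk G p) = rv G ` set p"
  by (auto simp: reverse_walk_def)

context
  fixes G :: "('v, 'o) graph"
  assumes graph: "finite_connected_graph G"
begin

lemma rv_in_oedges: "f \<in> oedges G \<Longrightarrow> rv G f \<in> oedges G"
  and rv_rv [simp]: "f \<in> oedges G \<Longrightarrow> rv G (rv G f) = f"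
  and org_in_verts: "f \<in> oedges G \<Longrightarrow> org G f \<in> verts G"
  and tm_in_verts: "f \<in> oedges G \<Longrightarrow> tm G f \<in> verts G"
  using graph by (auto simp: finite_connected_graph_def tm_def)

lemma walk_reverse_walk:
  "set p \<subseteq> oedges G \<Longrightarrow> walk G x p y \<Longrightarrow> walk G y (reverse_walk G p) x"
  by (induction p arbitrary: x) (auto simp: walk_append tm_def)

lemma reduced_reverse_walk:
  "set p \<subseteq> oedges G \<Longrightarrow> reduced G p \<Longrightarrow> reduced G (reverse_walk G p)"
proof (induction p)
  case (Cons f p)
  have "rv G f \<noteq> rv G (last (reverse_walk G p))" if "p \<noteq> []"
  proof -
    have "hd p \<in> oedges G" "hd p \<noteq> rv G f" "f \<in> oedges G"
      using Cons.prems that by (auto simp: reduced_Cons)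
    moreover have "last (reverse_walk G p) = rv G (hd p)"
      using that by (cases p) (auto simp: reverse_walk_def)
    ultimately show ?thesis by (metis rv_rv)
  qed
  then show ?case
    using Cons by (auto simp: reduced_append reduced_Cons reverse_walk_def)
qed simp

lemma reduce_walk:
  assumes "set p \<subseteq> S" "S \<subseteq> oedges G" "walk G x p y"
  shows "\<exists>q. set q \<subseteq> S \<and> walk G x q y \<and> reduced G q \<and> (p, q) \<in> htp G"
  using assms
proof (induction "length p" arbitrary: p rule: less_induct)
  case less
  show ?case
  proof (cases "reduced G p")
    case True
    then show ?thesis using less.prems htp_refl by blast
  next
    case False
    then obtain as f bs where p: "p = as @ [f, rv G f] @ bs" by (rule not_reduced_backtrack)
    have f: "f \<in> oedges G" using less.prems p by auto
    have "walk G x (as @ bs) y" "set (as @ bs) \<subseteq> S"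
      using less.prems f p by (auto simp: walk_append tm_def)
    then obtain q where q: "set q \<subseteq> S \<and> walk G x q y \<and> reduced G q \<and> (as @ bs, q) \<in> htp G"
      using less.hyps[of "as @ bs"] less.prems(2) p by auto
    have "(p, as @ bs) \<in> htp G"
      unfolding p by (rule htp_backtrack[OF f])
    with q show ?thesis by (blast intro: htp_trans)
  qed
qed

end

lemma htp_append_context: "(a, b) \<in> htp G \<Longrightarrow> (c @ a @ d, c @ b @ d) \<in> htp G"
  unfolding htp_def
proof (induction rule: rtrancl_induct)
  case (step y z)
  have "(c @ y @ d, c @ z @ d) \<in> backtrack G \<union> (backtrack G)\<inverse>"
    using step(2) unfolding backtrack_def by clarsimp (metis append.assoc append_Cons)
  with step(3) show ?case by (rule rtrancl_into_rtrancl)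
qed simp

lemma htp_append: "(a, b) \<in> htp G \<Longrightarrow> (a', b') \<in> htp G \<Longrightarrow> (a @ a', b @ b') \<in> htp G"
  using htp_append_context[of a b G "[]" a'] htp_append_context[of a' b' G b "[]"]
  by (auto intro: htp_trans)

lemma htp_cancel: "(q, []) \<in> htp G \<Longrightarrow> (a @ q @ b, a @ b) \<in> htp G"
  using htp_append_context[of q "[]" G a b] by simp

lemma htp_cancel_ends: "(q, []) \<in> htp G \<Longrightarrow> (q @ x @ q, x) \<in> htp G"
  using htp_cancel[of q G "[]" "x @ q"] htp_cancel[of q G x "[]"] by (auto intro: htp_trans)

lemma htp_map:
  assumes "\<forall>f\<in>oedges G. \<phi> f \<in> oedges G \<and> \<phi> (rv G f) = rv G (\<phi> f)"
    and "(a, b) \<in> htp G"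
  shows "(map \<phi> a, map \<phi> b) \<in> htp G"
  using assms(2) unfolding htp_def
proof (induction rule: rtrancl_induct)
  case (step y z)
  have "(map \<phi> y, map \<phi> z) \<in> backtrack G \<union> (backtrack G)\<inverse>"
    using step(2) assms(1) unfolding backtrack_def by force
  with step(3) show ?case by (rule rtrancl_into_rtrancl)
qed simp

lemma mem_hclass: "b \<in> hclass G a \<longleftrightarrow> (a, b) \<in> htp G"
  by (simp add: hclass_def)

lemma hclass_eq_iff: "hclass G a = hclass G b \<longleftrightarrow> (a, b) \<in> htp G"
  unfolding hclass_def by (auto intro: htp_trans htp_sym)

lemma carrier_pi1: "carrier (pi1 G r) = hclass G ` closed_walks G r"
  by (simp add: pi1_def)

lemma mult_pi1_hclass: "hclass G a \<otimes>\<^bsub>pi1 G r\<^esub> hclass G b = hclass G (a @ b)"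
  unfolding pi1_def hclass_def
  by (auto intro: htp_trans htp_sym htp_append) (use htp_refl in blast)

lemma basechange_map_hclass:
  assumes "\<forall>f\<in>oedges G. \<phi> f \<in> oedges G \<and> \<phi> (rv G f) = rv G (\<phi> f)"
  shows "basechange G T r r' (map \<phi> ` hclass G c)
           = hclass G (tpath G T r r' @ map \<phi> c @ tpath G T r' r)"
  unfolding basechange_def hclass_def
  by (auto intro: htp_trans[OF htp_append_context[OF htp_map[OF assms]]])

lemma basechange_hclass:
  "basechange G T r r' (hclass G c) = hclass G (tpath G T r r' @ c @ tpath G T r' r)"
  using basechange_map_hclass[of G id] by simp

section \<open>Holonomy of weights along walks\<close>

lemma rho_walk_Nil [simp]: "rho_walk w [] = 1"
  by (simp add: rho_walk_def)

lemma foldl_rho_walk: "foldl (\<lambda>acc f. w f * acc) a p = rho_walk w p * a"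
  unfolding rho_walk_def
proof (induction p arbitrary: a)
  case (Cons f p)
  show ?case using Cons[of "w f * a"] Cons[of "w f"] by (simp add: mult.assoc)
qed simp

lemma rho_walk_Cons [simp]: "rho_walk w (f # p) = rho_walk w p * w f"
  using foldl_rho_walk[of w "w f" p] by (simp add: rho_walk_def)

lemma rho_walk_append [simp]: "rho_walk w (p @ q) = rho_walk w q * rho_walk w p"
  by (induction p) (auto simp: mult.assoc)

lemma rho_walk_map: "rho_walk w (map \<phi> p) = rho_walk (w \<circ> \<phi>) p"
  by (induction p) auto

lemma rho_walk_cong: "(\<And>f. f \<in> set p \<Longrightarrow> w f = w' f) \<Longrightarrow> rho_walk w p = rho_walk w' p"
  by (induction p) auto

lemma rho_walk_eq_1: "(\<And>f. f \<in> set p \<Longrightarrow> w f = 1) \<Longrightarrow> rho_walk w p = 1"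
  by (induction p) auto

lemma rho_walk_hom:
  assumes "\<psi> 1 = 1" "\<And>x y. \<psi> (x * y) = \<psi> x * \<psi> y"
  shows "\<psi> (rho_walk w p) = rho_walk (\<psi> \<circ> w) p"
  by (induction p) (auto simp: assms)

lemma rho_walk_htp:
  assumes "\<forall>f\<in>oedges G. w (rv G f) * w f = 1" and "(a, b) \<in> htp G"
  shows "rho_walk w a = rho_walk w b"
  using assms(2) unfolding htp_def
proof (induction rule: rtrancl_induct)
  case (step y z)
  then have "rho_walk w y = rho_walk w z"
    using assms(1) unfolding backtrack_def by (auto simp: mult.assoc)
  with step(3) show ?case by simp
qed simp

lemma rho_hclass:
  assumes "\<forall>f\<in>oedges G. w (rv G f) * w f = 1"
  shows "rho w (hclass G a) = rho_walk w a"
proof -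
  have "(SOME p. p \<in> hclass G a) \<in> hclass G a"
    by (rule someI[of _ a]) (simp add: mem_hclass)
  then show ?thesis
    unfolding rho_def by (metis mem_hclass htp_sym rho_walk_htp[OF assms])
qed

lemma cadj_one [simp]: "cadj (1::'a::cstar) = 1"
proof -
  have "cadj (cadj 1 * (1::'a)) = cadj 1 * cadj (cadj 1)" by (rule cadj_mult)
  then show ?thesis by (simp add: cadj_cadj)
qed

lemma unitary_mult: "unitary u \<Longrightarrow> unitary v \<Longrightarrow> unitary (u * v)"
  unfolding unitary_def by (simp add: cadj_mult mult.assoc) (metis mult.assoc mult_1_left)

lemma unitary_rho_walk: "(\<And>f. f \<in> set p \<Longrightarrow> unitary (w f)) \<Longrightarrow> unitary (rho_walk w p)"
proof (induction p)
  case Nil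
  show ?case by (simp add: unitary_def)
qed (simp add: unitary_mult)

lemma weight_function_rv_mult:
  "weight_function G T wt \<Longrightarrow> f \<in> oedges G \<Longrightarrow> wt (rv G f) * wt f = 1"
  by (simp add: weight_function_def unitary_def)

lemma rho_walk_gauge:
  assumes graph: "finite_connected_graph G"
    and inverse: "\<And>x. x \<in> verts G \<Longrightarrow> S' x * S x = 1 \<and> S x * S' x = 1"
    and w': "\<And>g. g \<in> oedges G \<Longrightarrow> w' g = S' (tm G g) * w g * S (org G g)"
  shows "set p \<subseteq> oedges G \<Longrightarrow> walk G x p y \<Longrightarrow> x \<in> verts G
    \<Longrightarrow> rho_walk w' p = S' y * rho_walk w p * S x"
proof (induction p arbitrary: x)
  case Nil
  then show ?case using inverse by simp
next
  case (Cons g p)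
  then have g: "g \<in> oedges G" "org G g = x" "walk G (tm G g) p y" by auto
  have tm: "tm G g \<in> verts G" by (rule tm_in_verts[OF graph g(1)])
  have "rho_walk w' (g # p) = S' y * rho_walk w p * (S (tm G g) * S' (tm G g)) * w g * S x"
    using Cons.IH[OF _ g(3) tm] Cons.prems(1) w'[OF g(1)] g(2) by (simp add: mult.assoc)
  also have "\<dots> = S' y * rho_walk w (g # p) * S x"
    using inverse[OF tm] by (simp add: mult.assoc)
  finally show ?case .
qed

section \<open>Spanning trees\<close>

context
  fixes G :: "('v, 'o) graph" and T :: "'o set"
  assumes graph: "finite_connected_graph G" and tree: "spanning_tree G T"
begin

lemma spanning_tree_subset: "T \<subseteq> oedges G"
  and spanning_tree_rv: "f \<in> T \<Longrightarrow> rv G f \<in> T"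
  and spanning_tree_connected:
    "x \<in> verts G \<Longrightarrow> y \<in> verts G \<Longrightarrow> \<exists>ps. set ps \<subseteq> T \<and> walk G x ps y"
  and spanning_tree_acyclic:
    "set p \<subseteq> T \<Longrightarrow> walk G x p x \<Longrightarrow> p \<noteq> [] \<Longrightarrow> \<not> reduced G p"
  using tree by (auto simp: spanning_tree_def)

lemma tree_closed_walk_null: "set p \<subseteq> T \<Longrightarrow> walk G x p x \<Longrightarrow> (p, []) \<in> htp G"
  using reduce_walk[OF graph _ spanning_tree_subset] spanning_tree_acyclic by blast

lemma reduced_tree_walk_unique:
  "set p \<subseteq> T \<Longrightarrow> set q \<subseteq> T \<Longrightarrow> walk G x p y \<Longrightarrow> walk G x q y
   \<Longrightarrow> reduced G p \<Longrightarrow> reduced G q \<Longrightarrow> p = q"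
proof (induction p arbitrary: x q)
  case Nil
  then show ?case using spanning_tree_acyclic[of q x] by auto
next
  case (Cons f p)
  show ?case
  proof (cases q)
    case Nil
    then show ?thesis using Cons.prems spanning_tree_acyclic[of "f # p" x] by auto
  next
    case (Cons g q')
    show ?thesis
    proof (cases "f = g")
      case True
      then show ?thesis
        using Cons.IH[where x="tm G f" and q=q'] Cons.prems \<open>q = g # q'\<close> by (auto simp: reduced_Cons)
    next
      case False
      \<comment> \<open>going back along q and forward along p gives a reduced closed walk in the tree\<close>
      let ?c = "reverse_walk G (g # q') @ f # p"
      have q'_edges: "set (g # q') \<subseteq> oedges G"
        using Cons.prems \<open>q = g # q'\<close> spanning_tree_subset by auto
      have "walk G y ?c y"
        using walk_reverse_walk[OF graph q'_edges] Cons.prems \<open>q = g # q'\<close>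
        by (auto simp: walk_append)
      moreover have "reduced G ?c"
        using reduced_reverse_walk[OF graph q'_edges] Cons.prems \<open>q = g # q'\<close> False q'_edges
        by (subst reduced_append) (auto simp: rv_rv[OF graph])
      moreover have "set ?c \<subseteq> T"
        using Cons.prems \<open>q = g # q'\<close> spanning_tree_rv by auto
      ultimately show ?thesis using spanning_tree_acyclic by blast
    qed
  qed
qed

lemma tpath_eqI:
  assumes "set q \<subseteq> T" "walk G x q y" "reduced G q"
  shows "tpath G T x y = q"
  unfolding tpath_def
  by (rule the_equality) (use assms reduced_tree_walk_unique in auto)

lemma tpath_props:
  assumes "x \<in> verts G" "y \<in> verts G"
  shows "set (tpath G T x y) \<subseteq> T" "walk G x (tpath G T x y) y" "reduced G (tpath G T x y)"
proof -
  obtain p where "set p \<subseteq> T" "walk G x p y"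
    using spanning_tree_connected[OF assms] by blast
  then obtain q where "set q \<subseteq> T" "walk G x q y" "reduced G q"
    using reduce_walk[OF graph _ spanning_tree_subset] by blast
  with tpath_eqI show "set (tpath G T x y) \<subseteq> T" "walk G x (tpath G T x y) y"
    "reduced G (tpath G T x y)" by simp_all
qed

lemma tpath_self: "tpath G T x x = []"
  by (rule tpath_eqI) auto

lemma tpath_round_trip:
  "x \<in> verts G \<Longrightarrow> y \<in> verts G \<Longrightarrow> (tpath G T x y @ tpath G T y x, []) \<in> htp G"
  using tpath_props[of x y] tpath_props[of y x]
  by (intro tree_closed_walk_null) (auto simp: walk_append)

lemma rho_walk_tpath: "(\<And>f. f \<in> T \<Longrightarrow> w f = 1) \<Longrightarrow> x \<in> verts G \<Longrightarrow> y \<in> verts G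
  \<Longrightarrow> rho_walk w (tpath G T x y) = 1"
  using tpath_props(1)[of x y] by (auto intro: rho_walk_eq_1)

lemma lwalk_props:
  assumes "r \<in> verts G" "f \<in> oedges G"
  shows "walk G r (lwalk G T r f) r" "set (lwalk G T r f) \<subseteq> insert f T"
  using tpath_props[OF assms(1) org_in_verts[OF graph assms(2)]]
    tpath_props[OF tm_in_verts[OF graph assms(2)] assms(1)]
  unfolding lwalk_def by (auto simp: walk_append)

end

section \<open>Graph automorphisms\<close>

context
  fixes G :: "('v, 'o) graph" and \<phi>V :: "'v \<Rightarrow> 'v" and \<phi>O :: "'o \<Rightarrow> 'o"
  assumes graph: "finite_connected_graph G" and aut: "graph_aut G \<phi>V \<phi>O"
begin

lemma graph_aut_bij: "bij_betw \<phi>V (verts G) (verts G)" "bij_betw \<phi>O (oedges G) (oedges G)"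
  and graph_aut_rv: "f \<in> oedges G \<Longrightarrow> \<phi>O (rv G f) = rv G (\<phi>O f)"
  and graph_aut_org: "f \<in> oedges G \<Longrightarrow> org G (\<phi>O f) = \<phi>V (org G f)"
  using aut by (auto simp: graph_aut_def)

lemma graph_aut_oedges: "f \<in> oedges G \<Longrightarrow> \<phi>O f \<in> oedges G"
  and graph_aut_verts: "x \<in> verts G \<Longrightarrow> \<phi>V x \<in> verts G"
  using graph_aut_bij by (auto dest: bij_betwE)

lemma graph_aut_tm: "f \<in> oedges G \<Longrightarrow> tm G (\<phi>O f) = \<phi>V (tm G f)"
  by (simp add: tm_def graph_aut_rv[symmetric] graph_aut_org rv_in_oedges[OF graph])

lemma graph_aut_oedges_rv: "\<forall>f\<in>oedges G. \<phi>O f \<in> oedges G \<and> \<phi>O (rv G f) = rv G (\<phi>O f)"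
  using graph_aut_oedges graph_aut_rv by blast

lemma walk_map_graph_aut:
  "set p \<subseteq> oedges G \<Longrightarrow> walk G x p y \<Longrightarrow> walk G (\<phi>V x) (map \<phi>O p) (\<phi>V y)"
  by (induction p arbitrary: x) (auto simp: graph_aut_org graph_aut_tm)

lemma reduced_map_graph_aut: "set p \<subseteq> oedges G \<Longrightarrow> reduced G p \<Longrightarrow> reduced G (map \<phi>O p)"
proof (induction p)
  case (Cons f p)
  have "\<phi>O (hd p) \<noteq> rv G (\<phi>O f)" if "p \<noteq> []"
  proof
    assume "\<phi>O (hd p) = rv G (\<phi>O f)"
    moreover have "hd p \<in> oedges G" "f \<in> oedges G" using Cons.prems that by auto
    ultimately have "hd p = rv G f"
      using bij_betw_imp_inj_on[OF graph_aut_bij(2)]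
      by (metis graph_aut_rv inj_on_def rv_in_oedges[OF graph])
    then show False using Cons.prems that by (simp add: reduced_Cons)
  qed
  then show ?case using Cons by (auto simp: reduced_Cons hd_map)
qed simp

lemma graph_aut_inv: "graph_aut G (inv_into (verts G) \<phi>V) (inv_into (oedges G) \<phi>O)"
proof -
  have "inv_into (oedges G) \<phi>O (rv G f) = rv G (inv_into (oedges G) \<phi>O f)
        \<and> org G (inv_into (oedges G) \<phi>O f) = inv_into (verts G) \<phi>V (org G f)"
    if f: "f \<in> oedges G" for f
  proof -
    define g where "g = inv_into (oedges G) \<phi>O f"
    have g: "g \<in> oedges G" "\<phi>O g = f"
      unfolding g_def using graph_aut_bij(2) f
      by (auto simp: bij_betw_def inv_into_into f_inv_into_f)
    have "inv_into (oedges G) \<phi>O (rv G f) = rv G g"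
      using g graph_aut_rv graph_aut_bij(2) rv_in_oedges[OF graph]
      by (metis bij_betw_inv_into_left)
    moreover have "inv_into (verts G) \<phi>V (org G f) = org G g"
      using g graph_aut_org graph_aut_bij(1) org_in_verts[OF graph]
      by (metis bij_betw_inv_into_left)
    ultimately show ?thesis unfolding g_def by simp
  qed
  then show ?thesis
    using graph_aut_bij by (simp add: graph_aut_def bij_betw_inv_into)
qed

end

lemma spanning_tree_image:
  assumes graph: "finite_connected_graph G" and aut: "graph_aut G \<phi>V \<phi>O"
    and tree: "spanning_tree G T"
  shows "spanning_tree G (\<phi>O ` T)"
  unfolding spanning_tree_def
proof (intro conjI ballI allI impI notI)
  let ?\<psi>V = "inv_into (verts G) \<phi>V" and ?\<psi>O = "inv_into (oedges G) \<phi>O"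
  note bij = graph_aut_bij[OF graph aut]
  have T: "T \<subseteq> oedges G" by (rule spanning_tree_subset[OF graph tree])
  show "\<phi>O ` T \<subseteq> oedges G" using T graph_aut_oedges[OF graph aut] by auto
  show "rv G f \<in> \<phi>O ` T" if "f \<in> \<phi>O ` T" for f
    using that T spanning_tree_rv[OF graph tree] by (force simp flip: graph_aut_rv[OF graph aut])
  show "\<exists>ps. set ps \<subseteq> \<phi>O ` T \<and> walk G x ps y" if "x \<in> verts G" "y \<in> verts G" for x y
  proof -
    have xy: "?\<psi>V x \<in> verts G" "?\<psi>V y \<in> verts G" "\<phi>V (?\<psi>V x) = x" "\<phi>V (?\<psi>V y) = y"
      using that bij(1) by (auto simp: bij_betw_inv_into_right bij_betwE[OF bij_betw_inv_into])
    then obtain ps where "set ps \<subseteq> T" "walk G (?\<psi>V x) ps (?\<psi>V y)"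
      using spanning_tree_connected[OF graph tree] by blast
    then show ?thesis
      using walk_map_graph_aut[OF graph aut, of ps "?\<psi>V x" "?\<psi>V y"] T xy
      by (intro exI[of _ "map \<phi>O ps"]) auto
  qed
  fix x ps assume ps: "set ps \<subseteq> \<phi>O ` T \<and> walk G x ps x \<and> ps \<noteq> []" and "reduced G ps"
  \<comment> \<open>pull the closed walk back along the inverse automorphism\<close>
  have ps_edges: "set ps \<subseteq> oedges G" using ps T graph_aut_oedges[OF graph aut] by blast
  have "set (map ?\<psi>O ps) \<subseteq> T"
  proof
    fix g assume "g \<in> set (map ?\<psi>O ps)"
    then obtain t where "t \<in> T" "g = ?\<psi>O (\<phi>O t)" using ps by auto
    then show "g \<in> T" using T bij_betw_inv_into_left[OF bij(2)] by auto
  qed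
  moreover have "walk G (?\<psi>V x) (map ?\<psi>O ps) (?\<psi>V x)" "reduced G (map ?\<psi>O ps)"
    using walk_map_graph_aut[OF graph graph_aut_inv[OF graph aut] ps_edges] ps
      reduced_map_graph_aut[OF graph graph_aut_inv[OF graph aut] ps_edges \<open>reduced G ps\<close>] by auto
  ultimately show False using spanning_tree_acyclic[OF graph tree] ps by auto
qed

lemma tpath_image:
  assumes graph: "finite_connected_graph G" and aut: "graph_aut G \<phi>V \<phi>O"
    and tree: "spanning_tree G T" and xy: "x \<in> verts G" "y \<in> verts G"
  shows "tpath G (\<phi>O ` T) (\<phi>V x) (\<phi>V y) = map \<phi>O (tpath G T x y)"
proof (rule tpath_eqI[OF graph spanning_tree_image[OF graph aut tree]])
  note p = tpath_props[OF graph tree xy]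
  have edges: "set (tpath G T x y) \<subseteq> oedges G"
    using p(1) spanning_tree_subset[OF graph tree] by blast
  show "set (map \<phi>O (tpath G T x y)) \<subseteq> \<phi>O ` T" using p(1) by auto
  show "walk G (\<phi>V x) (map \<phi>O (tpath G T x y)) (\<phi>V y)"
    by (rule walk_map_graph_aut[OF graph aut edges p(2)])
  show "reduced G (map \<phi>O (tpath G T x y))"
    by (rule reduced_map_graph_aut[OF graph aut edges p(3)])
qed

lemma lwalk_image:
  assumes graph: "finite_connected_graph G" and aut: "graph_aut G \<phi>V \<phi>O"
    and tree: "spanning_tree G T" and r: "r \<in> verts G" and f: "f \<in> oedges G"
  shows "lwalk G (\<phi>O ` T) (\<phi>V r) (\<phi>O f) = map \<phi>O (lwalk G T r f)"
  unfolding lwalk_def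
  using tpath_image[OF graph aut tree r org_in_verts[OF graph f]]
    tpath_image[OF graph aut tree tm_in_verts[OF graph f] r]
  by (simp add: graph_aut_org[OF graph aut f] graph_aut_tm[OF graph aut f])

section \<open>C*-subalgebras\<close>

definition cstar_subalgebra :: "'a::cstar set \<Rightarrow> bool" where
  "cstar_subalgebra B \<longleftrightarrow> closed B \<and> 1 \<in> B
      \<and> (\<forall>x\<in>B. \<forall>y\<in>B. x + y \<in> B \<and> x * y \<in> B)
      \<and> (\<forall>c. \<forall>x\<in>B. cscale c x \<in> B) \<and> (\<forall>x\<in>B. cadj x \<in> B)"

lemma cstar_gen_eq: "cstar_gen S = \<Inter>{B. S \<subseteq> B \<and> cstar_subalgebra B}"
  unfolding cstar_gen_def cstar_subalgebra_def by meson

lemma cstar_gen_superset: "S \<subseteq> cstar_gen S"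
  unfolding cstar_gen_eq by blast

lemma cstar_gen_least: "S \<subseteq> B \<Longrightarrow> cstar_subalgebra B \<Longrightarrow> cstar_gen S \<subseteq> B"
  unfolding cstar_gen_eq by blast

lemma cstar_subalgebra_cstar_gen: "cstar_subalgebra (cstar_gen S)"
  unfolding cstar_gen_eq cstar_subalgebra_def by (auto intro!: closed_Inter)

lemma cstar_subalgebra_rho_walk:
  "cstar_subalgebra B \<Longrightarrow> (\<And>f. f \<in> set p \<Longrightarrow> w f \<in> B) \<Longrightarrow> rho_walk w p \<in> B"
  by (induction p) (auto simp: cstar_subalgebra_def)

lemma star_aut_eqI:
  assumes "star_aut \<psi>1" "star_aut \<psi>2" "cstar_gen W = UNIV" "\<And>w. w \<in> W \<Longrightarrow> \<psi>1 w = \<psi>2 w"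
  shows "\<psi>1 = \<psi>2"
proof -
  have "continuous_on UNIV \<psi>1" "continuous_on UNIV \<psi>2"
    using assms(1,2) by (auto simp: star_aut_def)
  then have "cstar_subalgebra {x. \<psi>1 x = \<psi>2 x}"
    using assms(1,2) closed_Collect_eq by (auto simp: cstar_subalgebra_def star_aut_def)
  then have "cstar_gen W \<subseteq> {x. \<psi>1 x = \<psi>2 x}"
    using assms(4) by (intro cstar_gen_least) auto
  then show ?thesis using assms(3) by auto
qed

lemma cstar_subalgebra_eq_UNIV_conj:
  fixes u :: "'a::cstar"
  assumes u: "unitary u" and B: "cstar_subalgebra B" and W: "cstar_gen W = UNIV"
    and conj_W: "\<And>w. w \<in> W \<Longrightarrow> cadj u * w * u \<in> B"
  shows "B = UNIV"
proof -
  let ?D = "(\<lambda>y. cadj u * y * u) -` B"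
  have uu: "cadj u * u = 1" "u * cadj u = 1" using u by (auto simp: unitary_def)
  \<comment> \<open>conjugation by a unitary is a continuous *-automorphism\<close>
  have "cadj u * (x * y) * u = (cadj u * x * u) * (cadj u * y * u)" for x y
    by (simp add: mult.assoc) (metis mult.assoc mult_1_left uu(2))
  moreover have "cadj u * cadj x * u = cadj (cadj u * x * u)" for x
    by (simp add: cadj_mult cadj_cadj mult.assoc)
  moreover have "closed ?D"
    using B by (intro closed_vimage) (auto simp: cstar_subalgebra_def intro!: continuous_intros)
  ultimately have "cstar_subalgebra ?D"
    using B uu by (auto simp: cstar_subalgebra_def algebra_simps cscale_mult_left cscale_mult_right)
  then have "cstar_gen W \<subseteq> ?D" using conj_W by (intro cstar_gen_least) auto
  then have conj_B: "cadj u * y * u \<in> B" for y using W by auto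
  have "z \<in> B" for z
    using conj_B[of "u * z * cadj u"] by (simp add: mult.assoc uu) (metis mult.assoc mult_1_left uu(1))
  then show ?thesis by auto
qed

section \<open>The automorphism of the fundamental group\<close>

locale tree_aut_setting =
  fixes G :: "('v, 'o) graph" and T :: "'o set" and r :: 'v
    and \<phi>V :: "'v \<Rightarrow> 'v" and \<phi>O :: "'o \<Rightarrow> 'o"
  assumes graph: "finite_connected_graph G" and tree: "spanning_tree G T"
    and root: "r \<in> verts G" and aut: "graph_aut G \<phi>V \<phi>O"
begin

abbreviation "T' \<equiv> \<phi>O ` T"
abbreviation "r' \<equiv> \<phi>V r"

lemma tree': "spanning_tree G T'"
  by (rule spanning_tree_image[OF graph aut tree])

lemma root': "r' \<in> verts G"
  by (rule graph_aut_verts[OF graph aut root])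

lemma tree_subset: "T \<subseteq> oedges G"
  by (rule spanning_tree_subset[OF graph tree])

definition pi1_aut :: "'o list set \<Rightarrow> 'o list set" where
  "pi1_aut X = basechange G T r r' (map \<phi>O ` X)"

lemma pi1_aut_hclass:
  "pi1_aut (hclass G c) = hclass G (tpath G T r r' @ map \<phi>O c @ tpath G T r' r)"
  unfolding pi1_aut_def by (rule basechange_map_hclass[OF graph_aut_oedges_rv[OF graph aut]])

lemma pi1_aut_lwalk:
  "f \<in> oedges G \<Longrightarrow> pi1_aut (hclass G (lwalk G T r f))
     = basechange G T r r' (hclass G (lwalk G T' r' (\<phi>O f)))"
  by (simp add: pi1_aut_hclass basechange_hclass lwalk_image[OF graph aut tree root])

lemma conj_map_closed_walk:
  assumes "c \<in> closed_walks G r"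
  shows "tpath G T r r' @ map \<phi>O c @ tpath G T r' r \<in> closed_walks G r"
proof -
  have "set c \<subseteq> oedges G" "walk G r c r" using assms by (auto simp: closed_walks_def)
  then have "set (map \<phi>O c) \<subseteq> oedges G" "walk G r' (map \<phi>O c) r'"
    using graph_aut_oedges[OF graph aut] walk_map_graph_aut[OF graph aut] by auto
  then show ?thesis
    using tpath_props[OF graph tree root root'] tpath_props[OF graph tree root' root] tree_subset
    by (auto simp: closed_walks_def walk_append)
qed

lemma pi1_aut_hom: "pi1_aut \<in> hom (pi1 G r) (pi1 G r)"
proof (rule homI)
  show "pi1_aut X \<in> carrier (pi1 G r)" if "X \<in> carrier (pi1 G r)" for X
    using that conj_map_closed_walk by (auto simp: carrier_pi1 pi1_aut_hclass)
  fix X Y assume "X \<in> carrier (pi1 G r)" "Y \<in> carrier (pi1 G r)"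
  then obtain c d where X: "X = hclass G c" and Y: "Y = hclass G d" by (auto simp: carrier_pi1)
  let ?P = "tpath G T r r'" and ?P' = "tpath G T r' r"
  have "(?P' @ ?P, []) \<in> htp G" by (rule tpath_round_trip[OF graph tree root' root])
  then have "((?P @ map \<phi>O c) @ (?P' @ ?P) @ (map \<phi>O d @ ?P'), (?P @ map \<phi>O c) @ (map \<phi>O d @ ?P'))
      \<in> htp G"
    by (rule htp_cancel)
  then show "pi1_aut (X \<otimes>\<^bsub>pi1 G r\<^esub> Y) = pi1_aut X \<otimes>\<^bsub>pi1 G r\<^esub> pi1_aut Y"
    by (simp add: X Y mult_pi1_hclass pi1_aut_hclass hclass_eq_iff htp_sym)
qed

lemma pi1_aut_bij: "bij_betw pi1_aut (carrier (pi1 G r)) (carrier (pi1 G r))"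
proof -
  let ?P = "tpath G T r r'" and ?P' = "tpath G T r' r"
  let ?\<psi>V = "inv_into (verts G) \<phi>V" and ?\<psi>O = "inv_into (oedges G) \<phi>O"
  note bij = graph_aut_bij[OF graph aut]
  have null: "(?P' @ ?P, []) \<in> htp G" "(?P @ ?P', []) \<in> htp G"
    using tpath_round_trip[OF graph tree] root root' by auto
  have inj: "inj_on pi1_aut (carrier (pi1 G r))"
  proof (rule inj_onI)
    fix X Y assume "X \<in> carrier (pi1 G r)" "Y \<in> carrier (pi1 G r)" and "pi1_aut X = pi1_aut Y"
    then obtain c d where cd: "c \<in> closed_walks G r" "d \<in> closed_walks G r"
      and X: "X = hclass G c" and Y: "Y = hclass G d"
      and conj: "(?P @ map \<phi>O c @ ?P', ?P @ map \<phi>O d @ ?P') \<in> htp G"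
      by (auto simp: carrier_pi1 pi1_aut_hclass hclass_eq_iff)
    have "((?P' @ ?P) @ map \<phi>O c @ (?P' @ ?P), (?P' @ ?P) @ map \<phi>O d @ (?P' @ ?P)) \<in> htp G"
      using htp_append_context[OF conj, of ?P' ?P] by simp
    then have "(map \<phi>O c, map \<phi>O d) \<in> htp G"
      using htp_cancel_ends[OF null(1)] by (meson htp_sym htp_trans)
    then have "(map ?\<psi>O (map \<phi>O c), map ?\<psi>O (map \<phi>O d)) \<in> htp G"
      by (rule htp_map[OF graph_aut_oedges_rv[OF graph graph_aut_inv[OF graph aut]]])
    moreover have "map ?\<psi>O (map \<phi>O c) = c" "map ?\<psi>O (map \<phi>O d) = d"
      using cd bij_betw_inv_into_left[OF bij(2)] by (auto simp: closed_walks_def intro!: map_idI)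
    ultimately show "X = Y" by (simp add: X Y hclass_eq_iff)
  qed
  have "Z \<in> pi1_aut ` carrier (pi1 G r)" if Z_carrier: "Z \<in> carrier (pi1 G r)" for Z
  proof -
    obtain c where c: "c \<in> closed_walks G r" and Z: "Z = hclass G c"
      using Z_carrier by (auto simp: carrier_pi1)
    let ?w = "?P' @ c @ ?P"
    have w: "set ?w \<subseteq> oedges G" "walk G r' ?w r'"
      using c tpath_props[OF graph tree root root'] tpath_props[OF graph tree root' root] tree_subset
      by (auto simp: closed_walks_def walk_append)
    have "?\<psi>V r' = r" by (rule bij_betw_inv_into_left[OF bij(1) root])
    then have d: "map ?\<psi>O ?w \<in> closed_walks G r"
      using walk_map_graph_aut[OF graph graph_aut_inv[OF graph aut] w]
        w(1) graph_aut_oedges[OF graph graph_aut_inv[OF graph aut]]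
      by (auto simp: closed_walks_def)
    have "map \<phi>O (map ?\<psi>O ?w) = ?w"
      using w(1) bij_betw_inv_into_right[OF bij(2)] by (auto intro!: map_idI)
    then have "pi1_aut (hclass G (map ?\<psi>O ?w)) = hclass G ((?P @ ?P') @ c @ (?P @ ?P'))"
      by (simp add: pi1_aut_hclass)
    also have "\<dots> = Z"
      using htp_cancel_ends[OF null(2)] by (simp add: Z hclass_eq_iff)
    finally show ?thesis using d by (auto simp: carrier_pi1)
  qed
  moreover have "pi1_aut ` carrier (pi1 G r) \<subseteq> carrier (pi1 G r)"
    using pi1_aut_hom by (auto simp: hom_def)
  ultimately show ?thesis using inj by (auto simp: bij_betw_def)
qed

lemma pi1_aut_iso: "pi1_aut \<in> iso (pi1 G r) (pi1 G r)"
  using pi1_aut_hom pi1_aut_bij by (simp add: iso_def)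

end

section \<open>Re-gauged weights\<close>

locale regauge_setting = tree_aut_setting G T r \<phi>V \<phi>O
  for G :: "('v, 'o) graph" and T r \<phi>V \<phi>O +
  fixes wt :: "'o \<Rightarrow> 'a::cstar"
  assumes weights: "weight_function G T wt"
begin

abbreviation "wt' \<equiv> regauge G T r T' r' wt"

lemma wt_rv_mult: "f \<in> oedges G \<Longrightarrow> wt (rv G f) * wt f = 1"
  by (rule weight_function_rv_mult[OF weights])

lemma wt_tree: "f \<in> T \<Longrightarrow> wt f = 1"
  using weights by (simp add: weight_function_def)

lemma regauge_eq_rho_walk: "wt' g = rho_walk wt (lwalk G T' r' g)"
proof -
  have "rho_walk wt (tpath G T r r') = 1" "rho_walk wt (tpath G T r' r) = 1"
    using rho_walk_tpath[OF graph tree wt_tree] root root' by auto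
  then show ?thesis
    by (simp add: regauge_def basechange_hclass rho_hclass wt_rv_mult)
qed

definition gauge :: "'v \<Rightarrow> 'a" where
  "gauge x = rho_walk wt (tpath G T' r' x)"

definition gauge_inv :: "'v \<Rightarrow> 'a" where
  "gauge_inv x = rho_walk wt (tpath G T' x r')"

lemma gauge_inverse: "x \<in> verts G \<Longrightarrow> gauge_inv x * gauge x = 1 \<and> gauge x * gauge_inv x = 1"
  using tpath_round_trip[OF graph tree' root'] tpath_round_trip[OF graph tree' _ root']
    rho_walk_htp[of G wt] wt_rv_mult
  unfolding gauge_def gauge_inv_def by (metis rho_walk_Nil rho_walk_append)

lemma gauge_root: "gauge r' = 1" "gauge_inv r' = 1"
  by (simp_all add: gauge_def gauge_inv_def tpath_self[OF graph tree'])

lemma regauge_eq_gauge: "wt' g = gauge_inv (tm G g) * wt g * gauge (org G g)"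
  by (simp add: regauge_eq_rho_walk lwalk_def gauge_def gauge_inv_def mult.assoc)

lemma rho_walk_regauge:
  "set p \<subseteq> oedges G \<Longrightarrow> walk G x p y \<Longrightarrow> x \<in> verts G
    \<Longrightarrow> rho_walk wt' p = gauge_inv y * rho_walk wt p * gauge x"
  by (rule rho_walk_gauge[OF graph gauge_inverse regauge_eq_gauge])

lemma regauge_image_tree: "f \<in> T \<Longrightarrow> wt' (\<phi>O f) = 1"
proof -
  assume f: "f \<in> T"
  then have "\<phi>O f \<in> oedges G" using tree_subset graph_aut_oedges[OF graph aut] by auto
  then have "set (lwalk G T' r' (\<phi>O f)) \<subseteq> T'" "walk G r' (lwalk G T' r' (\<phi>O f)) r'"
    using lwalk_props[OF graph tree' root'] f by auto
  then have "(lwalk G T' r' (\<phi>O f), []) \<in> htp G" by (rule tree_closed_walk_null[OF graph tree'])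
  then show ?thesis using rho_walk_htp[of G wt] wt_rv_mult by (simp add: regauge_eq_rho_walk)
qed

lemma star_aut_regauge_eq_on_oedges:
  assumes "star_aut \<psi>" "\<forall>f\<in>oedges G - T. \<psi> (wt f) = wt' (\<phi>O f)" "f \<in> oedges G"
  shows "\<psi> (wt f) = wt' (\<phi>O f)"
  using assms wt_tree regauge_image_tree by (cases "f \<in> T") (auto simp: star_aut_def)

lemma star_aut_regauge_unique:
  assumes "star_aut \<psi>1" "star_aut \<psi>2"
    and "\<forall>f\<in>oedges G - T. \<psi>1 (wt f) = wt' (\<phi>O f)"
    and "\<forall>f\<in>oedges G - T. \<psi>2 (wt f) = wt' (\<phi>O f)"
  shows "\<psi>1 = \<psi>2"
proof (rule star_aut_eqI[OF assms(1,2)])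
  show "cstar_gen (wt ` oedges G) = UNIV" using weights by (simp add: weight_function_def)
  show "\<psi>1 w = \<psi>2 w" if "w \<in> wt ` oedges G" for w
    using that star_aut_regauge_eq_on_oedges[OF assms(1,3)] star_aut_regauge_eq_on_oedges[OF assms(2,4)]
    by auto
qed

lemma cstar_gen_regauge: "cstar_gen ((\<lambda>f. wt' (\<phi>O f)) ` oedges G) = UNIV"
proof -
  let ?B = "cstar_gen ((\<lambda>f. wt' (\<phi>O f)) ` oedges G)"
  have B: "cstar_subalgebra ?B" by (rule cstar_subalgebra_cstar_gen)
  have "(\<lambda>f. wt' (\<phi>O f)) ` oedges G = wt' ` oedges G"
    using bij_betw_imp_surj_on[OF graph_aut_bij(2)[OF graph aut]] by (simp add: image_image[symmetric])
  then have wt'_B: "wt' g \<in> ?B" if "g \<in> oedges G" for g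
    using that cstar_gen_superset by blast
  \<comment> \<open>a path in T has trivial wt-holonomy, so its wt'-holonomy is a product of gauge values\<close>
  have gauge_B: "gauge_inv y * gauge x \<in> ?B" if "x \<in> verts G" "y \<in> verts G" for x y
  proof -
    note p = tpath_props[OF graph tree that]
    have "rho_walk wt' (tpath G T x y) = gauge_inv y * gauge x"
      using rho_walk_regauge[OF _ p(2) that(1)] p(1) tree_subset
        rho_walk_tpath[OF graph tree wt_tree that] by auto
    moreover have "rho_walk wt' (tpath G T x y) \<in> ?B"
      using p(1) tree_subset by (intro cstar_subalgebra_rho_walk[OF B] wt'_B) auto
    ultimately show ?thesis by simp
  qed
  let ?u = "gauge r"
  have u: "unitary ?u"
    using tpath_props(1)[OF graph tree' root' root] spanning_tree_subset[OF graph tree'] weights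
    unfolding gauge_def by (intro unitary_rho_walk) (auto simp: weight_function_def)
  have "cadj ?u = (cadj ?u * ?u) * gauge_inv r"
    using gauge_inverse[OF root] by (simp add: mult.assoc)
  then have cadj_u: "cadj ?u = gauge_inv r"
    using u by (simp add: unitary_def)
  show ?thesis
  proof (rule cstar_subalgebra_eq_UNIV_conj[OF u B])
    show "cstar_gen (wt ` oedges G) = UNIV" using weights by (simp add: weight_function_def)
    show "cadj ?u * w * ?u \<in> ?B" if w: "w \<in> wt ` oedges G" for w
    proof -
      obtain g where g: "g \<in> oedges G" "w = wt g" using w by blast
      note ends = org_in_verts[OF graph g(1)] tm_in_verts[OF graph g(1)]
      have "cadj ?u * w * ?u = gauge_inv r * (gauge (tm G g) * gauge_inv (tm G g)) * wt g
          * (gauge (org G g) * gauge_inv (org G g)) * gauge r"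
        using gauge_inverse ends by (simp add: g(2) cadj_u)
      also have "\<dots> = (gauge_inv r * gauge (tm G g)) * wt' g * (gauge_inv (org G g) * gauge r)"
        by (simp add: regauge_eq_gauge mult.assoc)
      finally show ?thesis
        using B gauge_B ends root wt'_B[OF g(1)] by (simp add: cstar_subalgebra_def)
    qed
  qed
qed

lemma star_aut_rho_pi1_aut:
  assumes \<psi>: "star_aut \<psi>" "\<forall>f\<in>oedges G. \<psi> (wt f) = wt' (\<phi>O f)"
    and X: "X \<in> carrier (pi1 G r)"
  shows "\<psi> (rho wt X) = rho wt (pi1_aut X)"
proof -
  obtain c where c: "set c \<subseteq> oedges G" "walk G r c r" and X: "X = hclass G c"
    using X by (auto simp: carrier_pi1 closed_walks_def)
  have "\<psi> (rho wt X) = rho_walk (\<psi> \<circ> wt) c"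
    using \<psi>(1) by (simp add: X rho_hclass wt_rv_mult rho_walk_hom star_aut_def)
  also have "\<dots> = rho_walk wt' (map \<phi>O c)"
    unfolding rho_walk_map using \<psi>(2) c(1) by (intro rho_walk_cong) auto
  also have "\<dots> = rho_walk wt (map \<phi>O c)"
    using rho_walk_regauge[of "map \<phi>O c" r' r'] walk_map_graph_aut[OF graph aut c]
      graph_aut_oedges[OF graph aut] c(1) root' gauge_root by auto
  also have "\<dots> = rho wt (pi1_aut X)"
    using rho_walk_tpath[OF graph tree wt_tree] root root'
    by (simp add: X pi1_aut_hclass rho_hclass wt_rv_mult)
  finally show ?thesis .
qed

end

theorem mainTheorem3:
  fixes G :: "('v, 'o) graph" and T :: "'o set" and r :: 'v
    and wt :: "'o \<Rightarrow> 'a::cstar"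
    and \<phi>V :: "'v \<Rightarrow> 'v" and \<phi>O :: "'o \<Rightarrow> 'o"
  assumes graph: "finite_connected_graph G"
    and tree: "spanning_tree G T" and root: "r \<in> verts G"
    and weights: "weight_function G T wt"
    and aut: "graph_aut G \<phi>V \<phi>O"
  defines "T' \<equiv> \<phi>O ` T" and "r' \<equiv> \<phi>V r"
    and "wt' \<equiv> regauge G T r (\<phi>O ` T) (\<phi>V r) wt"
  shows
    \<comment> \<open>(1) uniqueness, determined by the non-tree edges\<close>
    "(\<forall>\<psi>1 \<psi>2. star_aut \<psi>1 \<and> star_aut \<psi>2
         \<and> (\<forall>f\<in>oedges G - T. \<psi>1 (wt f) = wt' (\<phi>O f))
         \<and> (\<forall>f\<in>oedges G - T. \<psi>2 (wt f) = wt' (\<phi>O f)) \<longrightarrow> \<psi>1 = \<psi>2)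
     \<and> (\<forall>\<psi>. star_aut \<psi> \<and> (\<forall>f\<in>oedges G - T. \<psi> (wt f) = wt' (\<phi>O f))
         \<longrightarrow> (\<forall>f\<in>oedges G. \<psi> (wt f) = wt' (\<phi>O f)))
     \<comment> \<open>(2) the elements wt'(phi f) generate the algebra\<close>
     \<and> cstar_gen ((\<lambda>f. wt' (\<phi>O f)) ` oedges G) = UNIV
     \<comment> \<open>(3) induced by an automorphism of the fundamental group\<close>
     \<and> (\<exists>\<beta>. \<beta> \<in> iso (pi1 G r) (pi1 G r)
         \<and> (\<forall>f\<in>oedges G - T. \<beta> (hclass G (lwalk G T r f))
                = basechange G T r r' (hclass G (lwalk G T' r' (\<phi>O f))))
         \<and> (\<forall>\<psi>. star_aut \<psi> \<and> (\<forall>f\<in>oedges G. \<psi> (wt f) = wt' (\<phi>O f))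
              \<longrightarrow> (\<forall>x\<in>carrier (pi1 G r). \<psi> (rho wt x) = rho wt (\<beta> x))))"
proof -
  interpret regauge_setting G T r \<phi>V \<phi>O wt
    using graph tree root aut weights by unfold_locales
  show ?thesis
    unfolding T'_def r'_def wt'_def
    using star_aut_regauge_unique star_aut_regauge_eq_on_oedges cstar_gen_regauge
      pi1_aut_iso pi1_aut_lwalk star_aut_rho_pi1_aut
    by blast
qed

end
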